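(* Let $k\geqslant0$ and $m\geqslant1$ be integers, let $U\subset\{k+1,\dots,k+m\}$, let $q$ be a positive integer and $a$ a residue class modulo $q$. If $|U|\geqslant\frac m2+\frac q2$, then the number of elements of $U+U$ that are congruent to $a$ modulo $q$ is at least $\frac2q|U|-1$.
   Context: $U+U=\{u+u':u,u'\in U\}$. *)

theory Defs
  imports Complex_Main "HOL-Number_Theory.Cong"
begin

definition sumset :: "int set \<Rightarrow> int set \<Rightarrow> int set" where
  "sumset A B = {u + v | u v. u \<in> A \<and> v \<in> B}"

end

theory Submission
  imports Defs
begin

text \<open>Split \<open>U\<close> into residue classes mod \<open>q\<close>. On average over \<open>r\<close>, the classes of \<open>r\<close> and
  \<open>a - r\<close> together contain \<open>2|U|/q\<close> elements, so some pair \<open>A, B\<close> does. Every class lies in an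
  interval of length \<open>m\<close> and so has at most \<open>(m + q - 1)/q < 2|U|/q\<close> elements; hence both \<open>A\<close> and
  \<open>B\<close> are nonempty. Then \<open>A + B\<close> consists of elements of \<open>U + U\<close> congruent to \<open>a\<close>, and
  \<open>|A + B| \<ge> |A| + |B| - 1\<close> as for any two nonempty finite sets of integers.\<close>

lemma sumset_eq_image: "sumset A B = (\<lambda>(u, v). u + v) ` (A \<times> B)"
  unfolding sumset_def by auto

lemma finite_sumset: "finite A \<Longrightarrow> finite B \<Longrightarrow> finite (sumset A B)"
  by (simp add: sumset_eq_image)

text \<open>The sums \<open>min A + b\<close> and \<open>a + max B\<close> are distinct except for \<open>min A + max B\<close>.\<close>

lemma card_sumset_ge:
  fixes A B :: "int set"
  assumes "finite A" "finite B" "A \<noteq> {}" "B \<noteq> {}"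
  shows "card A + card B \<le> card (sumset A B) + 1"
proof -
  define X where "X = (\<lambda>b. Min A + b) ` B"
  define Y where "Y = (\<lambda>a. a + Max B) ` A"
  have "card X = card B" "card Y = card A"
    unfolding X_def Y_def by (simp_all add: card_image)
  moreover have "X \<inter> Y \<subseteq> {Min A + Max B}"
  proof
    fix z assume "z \<in> X \<inter> Y"
    then obtain a b where "a \<in> A" "b \<in> B" "z = Min A + b" "z = a + Max B"
      unfolding X_def Y_def by auto
    moreover have "Min A \<le> a" "b \<le> Max B" using assms calculation by auto
    ultimately show "z \<in> {Min A + Max B}" by auto
  qed
  then have "card (X \<inter> Y) \<le> 1"
    using card_mono[of "{Min A + Max B}"] by fastforce
  moreover have "X \<union> Y \<subseteq> sumset A B"
    using assms unfolding X_def Y_def sumset_def by (blast intro: Min_in Max_in)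
  then have "card (X \<union> Y) \<le> card (sumset A B)"
    using assms by (intro card_mono finite_sumset)
  moreover have "card (X \<union> Y) + card (X \<inter> Y) = card X + card Y"
    using assms card_Un_Int[of X Y] unfolding X_def Y_def by simp
  ultimately show ?thesis by linarith
qed

lemma card_residue_class_in_interval:
  fixes S :: "int set" and k m q r :: int
  assumes "S \<subseteq> {k+1..k+m}" and "m \<ge> 0" and "q > 0" and "\<And>x. x \<in> S \<Longrightarrow> x mod q = r"
  shows "q * int (card S) \<le> m + q - 1"
proof (cases "S = {}")
  case True
  with assms(2,3) show ?thesis by simp
next
  case False
  define f where "f x = (x - (k+1)) div q" for x
  have "inj_on f S"
  proof (rule inj_onI)
    fix x y assume "x \<in> S" "y \<in> S" "f x = f y"
    then have "(x - (k+1)) mod q = (y - (k+1)) mod q"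
      using assms(4) by (simp add: mod_diff_cong)
    with \<open>f x = f y\<close> have "x - (k+1) = y - (k+1)"
      unfolding f_def by (metis mult_div_mod_eq)
    then show "x = y" by simp
  qed
  moreover have "f ` S \<subseteq> {0..(m-1) div q}"
  proof
    fix z assume "z \<in> f ` S"
    then obtain x where "x \<in> S" "z = (x - (k+1)) div q" unfolding f_def by blast
    moreover have "0 \<le> x - (k+1)" "x - (k+1) \<le> m - 1" using assms(1) \<open>x \<in> S\<close> by auto
    ultimately show "z \<in> {0..(m-1) div q}"
      using assms(3) by (simp add: zdiv_mono1 pos_imp_zdiv_nonneg_iff)
  qed
  ultimately have "card S \<le> card {0..(m-1) div q}"
    using card_inj_on_le by blast
  moreover have "0 \<le> (m-1) div q"
    using False assms(1,3) by (force simp: pos_imp_zdiv_nonneg_iff)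
  ultimately have "int (card S) \<le> (m-1) div q + 1" by simp
  then have "q * int (card S) \<le> q * ((m-1) div q) + q"
    using mult_left_mono[of _ _ q] assms(3) by (fastforce simp: distrib_left)
  moreover have "q * ((m-1) div q) \<le> m - 1"
    using assms(3) mult_div_mod_eq[of q "m-1"] pos_mod_sign[of q "m-1"] by linarith
  ultimately show ?thesis by linarith
qed

lemma card_eq_sum_card_residue_classes:
  fixes U :: "int set" and q :: int
  assumes "finite U" and "q > 0"
  shows "(\<Sum>r\<in>{0..<q}. card {u \<in> U. u mod q = r}) = card U"
proof -
  have "U = (\<Union>r\<in>{0..<q}. {u \<in> U. u mod q = r})" using assms(2) by auto
  also have "card \<dots> = (\<Sum>r\<in>{0..<q}. card {u \<in> U. u mod q = r})"
    using assms(1) by (intro card_UN_disjoint) auto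
  finally show ?thesis by simp
qed

lemma exists_ge_average:
  fixes f :: "'a \<Rightarrow> nat"
  assumes "finite I" and "I \<noteq> {}"
  shows "\<exists>i\<in>I. sum f I \<le> card I * f i"
proof (rule ccontr)
  assume "\<not> ?thesis"
  then have "(\<Sum>i\<in>I. card I * f i) < (\<Sum>i\<in>I. sum f I)"
    using assms by (intro sum_strict_mono) (auto simp: not_le)
  then show False by (simp add: sum_distrib_left)
qed

lemma exists_complementary_residue_classes:
  fixes U :: "int set" and q a :: int
  assumes "finite U" and "q > 0"
  shows "\<exists>r. 2 * int (card U) \<le>
    q * (int (card {u \<in> U. u mod q = r}) + int (card {u \<in> U. u mod q = (a - r) mod q}))"
proof -
  define c where "c r = card {u \<in> U. u mod q = r}" for r
  have "(\<Sum>r\<in>{0..<q}. c ((a - r) mod q)) = (\<Sum>r\<in>{0..<q}. c r)"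
    by (rule sum.reindex_bij_witness[of _ "\<lambda>r. (a - r) mod q" "\<lambda>r. (a - r) mod q"])
      (use assms(2) in \<open>auto simp: mod_diff_right_eq\<close>)
  then have "(\<Sum>r\<in>{0..<q}. c r + c ((a - r) mod q)) = 2 * card U"
    using card_eq_sum_card_residue_classes[OF assms] by (simp add: sum.distrib c_def)
  then obtain r where "2 * card U \<le> nat q * (c r + c ((a - r) mod q))"
    using exists_ge_average[of "{0..<q}" "\<lambda>r. c r + c ((a - r) mod q)"] assms(2) by auto
  then have "int (2 * card U) \<le> int (nat q * (c r + c ((a - r) mod q)))"
    by linarith
  then show ?thesis using assms(2) unfolding c_def by auto
qed

lemma sumset_residue_classes_subset:
  fixes U :: "int set" and q r s :: int
  shows "sumset {u \<in> U. u mod q = r} {u \<in> U. u mod q = s}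
    \<subseteq> {x \<in> sumset U U. [x = r + s] (mod q)}"
  unfolding sumset_def cong_def by (auto simp: mod_add_eq)

theorem mainTheorem7:
  fixes k m q a :: int and U :: "int set"
  assumes "k \<ge> 0" and "m \<ge> 1"
    and "U \<subseteq> {k+1..k+m}"
    and "q > 0"
    and "real (card U) \<ge> real_of_int m / 2 + real_of_int q / 2"
  shows "real (card {x \<in> sumset U U. [x = a] (mod q)}) \<ge> 2 / real_of_int q * real (card U) - 1"
proof -
  define T where "T = {x \<in> sumset U U. [x = a] (mod q)}"
  have "finite U" using assms(3) finite_subset by blast
  then obtain r where r: "2 * int (card U) \<le>
      q * (int (card {u \<in> U. u mod q = r}) + int (card {u \<in> U. u mod q = (a - r) mod q}))"
    using exists_complementary_residue_classes assms(4) by blast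
  define A where "A = {u \<in> U. u mod q = r}"
  define B where "B = {u \<in> U. u mod q = (a - r) mod q}"
  have "q * int (card A) \<le> m + q - 1"
    unfolding A_def by (rule card_residue_class_in_interval[of _ k]) (use assms(2-4) in auto)
  moreover have "q * int (card B) \<le> m + q - 1"
    unfolding B_def by (rule card_residue_class_in_interval[of _ k]) (use assms(2-4) in auto)
  moreover have "m + q \<le> 2 * int (card U)" using assms(5) by linarith
  ultimately have "0 < q * int (card A)" "0 < q * int (card B)"
    using r unfolding A_def B_def distrib_left by linarith+
  then have "A \<noteq> {}" "B \<noteq> {}" by auto
  moreover have "finite A" "finite B" unfolding A_def B_def using \<open>finite U\<close> by auto
  ultimately have "card A + card B \<le> card (sumset A B) + 1" using card_sumset_ge by blast
  moreover have "sumset A B \<subseteq> T"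
    using sumset_residue_classes_subset[of U q r "(a - r) mod q"]
    unfolding A_def B_def T_def cong_def by (simp add: mod_add_right_eq)
  then have "card (sumset A B) \<le> card T"
    using \<open>finite U\<close> unfolding T_def by (intro card_mono) (simp_all add: finite_sumset)
  ultimately have "q * (int (card A) + int (card B)) \<le> q * (int (card T) + 1)"
    using assms(4) by (intro mult_left_mono) linarith+
  with r have "2 * int (card U) \<le> q * (int (card T) + 1)" unfolding A_def B_def by linarith
  then have "real_of_int (2 * int (card U)) \<le> real_of_int (q * (int (card T) + 1))"
    by (simp only: of_int_le_iff)
  then have "2 * real (card U) \<le> real_of_int q * (real (card T) + 1)" by simp
  then show ?thesis using assms(4) unfolding T_def by (simp add: field_simps)
qed

end
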